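(* Let $\omega$ be a general obstacle that does not have a cross, and let $S^*$ be a minimum skeleton for $\omega$. Then $|S^*|\geq 3$.
   Context: An obstacle $\omega$ is a simple polygon in $\mathbb{R}^2$ (a closed, bounded polygonal region without holes whose boundary does not intersect itself), assumed in general position (no three of its vertices are collinear); vertices and edges of $\omega$ are those of its boundary. $\omega$ is rectilinear if each edge is horizontal or vertical, and a rectilinear obstacle is rectilinearly-convex if any two points of $\omega$ can be joined by a shortest rectilinear path (made of horizontal and vertical segments, of minimum $\ell_1$ length) contained in $\omega$. A corner point of a rectilinear path is a point where a horizontal and a vertical segment of the path meet. A set $S$ of closed line segments is inside $\omega$ if the union of its elements is contained in $\omega$. Such an $S$ is a skeleton for $\omega$ if for every pair of points $p,q$ not in the interior of $\omega$ such that every shortest rectilinear path between $p$ and $q$ with at most one corner point meets the interior of $\omega$, each such path intersects some element of $S$; a minimum skeleton is one with the fewest segments and $|S|$ is the number of segments. $B(\omega)$ is the smallest closed axis-parallel rectangle containing $\omega$; the extreme edges are the edges of $\omega$ lying on the boundary of $B(\omega)$ (exactly four: left, right, bottom, top); an extreme corner is a vertex of $\omega$ that is a common endpoint of two extreme edges. A general obstacle is a rectilinearly-convex obstacle with no extreme corners. A cross of $\omega$ is a pair $\{s_H,s_V\}$ of line segments contained in $\omega$, where $s_H$ has one endpoint on each of the two horizontal extreme edges and $s_V$ has one endpoint on each of the two vertical extreme edges. *)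

theory Defs
  imports "HOL-Analysis.Analysis"
begin

type_synonym pt = "real \<times> real"

definition nv :: "pt list \<Rightarrow> nat" where "nv vs = length vs"

definition vtx :: "pt list \<Rightarrow> nat \<Rightarrow> pt" where
  "vtx vs i = vs ! (i mod length vs)"

definition edge :: "pt list \<Rightarrow> nat \<Rightarrow> pt set" where
  "edge vs i = closed_segment (vtx vs i) (vtx vs (Suc i))"

definition poly_boundary :: "pt list \<Rightarrow> pt set" where
  "poly_boundary vs = (\<Union>i<length vs. edge vs i)"

definition simple_polygon :: "pt list \<Rightarrow> bool" where
  "simple_polygon vs \<longleftrightarrow> length vs \<ge> 3 \<and> distinct vs \<and>
     (\<forall>i<length vs. edge vs i \<inter> edge vs (Suc i) = {vtx vs (Suc i)}) \<and>
     (\<forall>i<length vs. \<forall>j<length vs. i \<noteq> j \<and> j \<noteq> Suc i mod length vs \<and> i \<noteq> Suc j mod length vs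
        \<longrightarrow> edge vs i \<inter> edge vs j = {})"

definition general_position :: "pt list \<Rightarrow> bool" where
  "general_position vs \<longleftrightarrow>
     (\<forall>a\<in>set vs. \<forall>b\<in>set vs. \<forall>c\<in>set vs. a \<noteq> b \<and> b \<noteq> c \<and> a \<noteq> c \<longrightarrow> \<not> collinear {a, b, c})"

text \<open>The obstacle: the closed bounded region bounded by the polygon.\<close>
definition region :: "pt list \<Rightarrow> pt set" where
  "region vs = poly_boundary vs \<union> inside (poly_boundary vs)"

definition obstacle :: "pt list \<Rightarrow> bool" where
  "obstacle vs \<longleftrightarrow> simple_polygon vs \<and> general_position vs"

definition rectilinear :: "pt list \<Rightarrow> bool" where
  "rectilinear vs \<longleftrightarrow> (\<forall>i<length vs.
     fst (vtx vs i) = fst (vtx vs (Suc i)) \<or> snd (vtx vs i) = snd (vtx vs (Suc i)))"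

text \<open>A rectilinear path is given by its list of breakpoints; consecutive
  breakpoints are joined by horizontal or vertical segments.\<close>
definition rect_path :: "pt list \<Rightarrow> bool" where
  "rect_path ps \<longleftrightarrow> ps \<noteq> [] \<and> (\<forall>i. Suc i < length ps \<longrightarrow>
     fst (ps ! i) = fst (ps ! Suc i) \<or> snd (ps ! i) = snd (ps ! Suc i))"

definition pseg :: "pt list \<Rightarrow> nat \<Rightarrow> pt set" where
  "pseg ps i = closed_segment (ps ! i) (ps ! Suc i)"

definition path_set :: "pt list \<Rightarrow> pt set" where
  "path_set ps = set ps \<union> (\<Union>i\<in>{i. Suc i < length ps}. pseg ps i)"

definition l1dist :: "pt \<Rightarrow> pt \<Rightarrow> real" where
  "l1dist p q = \<bar>fst q - fst p\<bar> + \<bar>snd q - snd p\<bar>"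

definition rlen :: "pt list \<Rightarrow> real" where
  "rlen ps = (\<Sum>i\<in>{i. Suc i < length ps}. l1dist (ps ! i) (ps ! Suc i))"

definition shortest_rect_path :: "pt list \<Rightarrow> pt \<Rightarrow> pt \<Rightarrow> bool" where
  "shortest_rect_path ps p q \<longleftrightarrow> rect_path ps \<and> hd ps = p \<and> last ps = q \<and>
     rlen ps = l1dist p q"

definition corners :: "pt list \<Rightarrow> pt set" where
  "corners ps = {x. \<exists>i j. Suc i < length ps \<and> Suc j < length ps \<and>
      snd (ps ! i) = snd (ps ! Suc i) \<and> fst (ps ! i) \<noteq> fst (ps ! Suc i) \<and>
      fst (ps ! j) = fst (ps ! Suc j) \<and> snd (ps ! j) \<noteq> snd (ps ! Suc j) \<and>
      x \<in> pseg ps i \<and> x \<in> pseg ps j}"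

definition one_corner_paths :: "pt \<Rightarrow> pt \<Rightarrow> pt set set" where
  "one_corner_paths p q = {path_set ps | ps. shortest_rect_path ps p q \<and>
      (\<forall>x\<in>corners ps. \<forall>y\<in>corners ps. x = y)}"

definition rect_convex :: "pt list \<Rightarrow> bool" where
  "rect_convex vs \<longleftrightarrow> rectilinear vs \<and>
     (\<forall>p\<in>region vs. \<forall>q\<in>region vs. \<exists>ps. shortest_rect_path ps p q \<and> path_set ps \<subseteq> region vs)"

definition is_closed_segment :: "pt set \<Rightarrow> bool" where
  "is_closed_segment s \<longleftrightarrow> (\<exists>a b. a \<noteq> b \<and> s = closed_segment a b)"

definition skeleton :: "pt list \<Rightarrow> pt set set \<Rightarrow> bool" where
  "skeleton vs S \<longleftrightarrow> finite S \<and> (\<forall>s\<in>S. is_closed_segment s) \<and> \<Union>S \<subseteq> region vs \<and>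
     (\<forall>p q. p \<notin> interior (region vs) \<longrightarrow> q \<notin> interior (region vs) \<longrightarrow>
        (\<forall>P\<in>one_corner_paths p q. P \<inter> interior (region vs) \<noteq> {}) \<longrightarrow>
        (\<forall>P\<in>one_corner_paths p q. \<exists>s\<in>S. P \<inter> s \<noteq> {}))"

definition min_skeleton :: "pt list \<Rightarrow> pt set set \<Rightarrow> bool" where
  "min_skeleton vs S \<longleftrightarrow> skeleton vs S \<and> (\<forall>S'. skeleton vs S' \<longrightarrow> card S \<le> card S')"

definition bbox :: "pt set \<Rightarrow> pt set" where
  "bbox W = {x. Inf (fst ` W) \<le> fst x \<and> fst x \<le> Sup (fst ` W) \<and>
                Inf (snd ` W) \<le> snd x \<and> snd x \<le> Sup (snd ` W)}"

definition extreme_edge :: "pt list \<Rightarrow> nat \<Rightarrow> bool" where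
  "extreme_edge vs i \<longleftrightarrow> i < length vs \<and> edge vs i \<subseteq> frontier (bbox (region vs))"

definition horizontal_edge :: "pt list \<Rightarrow> nat \<Rightarrow> bool" where
  "horizontal_edge vs i \<longleftrightarrow> snd (vtx vs i) = snd (vtx vs (Suc i))"

definition vertical_edge :: "pt list \<Rightarrow> nat \<Rightarrow> bool" where
  "vertical_edge vs i \<longleftrightarrow> fst (vtx vs i) = fst (vtx vs (Suc i))"

definition extreme_corner :: "pt list \<Rightarrow> pt \<Rightarrow> bool" where
  "extreme_corner vs v \<longleftrightarrow> v \<in> set vs \<and> (\<exists>i j. i \<noteq> j \<and> extreme_edge vs i \<and> extreme_edge vs j \<and>
      v \<in> {vtx vs i, vtx vs (Suc i)} \<and> v \<in> {vtx vs j, vtx vs (Suc j)})"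

definition general_obstacle :: "pt list \<Rightarrow> bool" where
  "general_obstacle vs \<longleftrightarrow> obstacle vs \<and> rect_convex vs \<and> (\<nexists>v. extreme_corner vs v)"

definition is_cross :: "pt list \<Rightarrow> pt set \<Rightarrow> pt set \<Rightarrow> bool" where
  "is_cross vs sH sV \<longleftrightarrow> sH \<subseteq> region vs \<and> sV \<subseteq> region vs \<and>
     (\<exists>a b i j. sH = closed_segment a b \<and> i \<noteq> j \<and>
        extreme_edge vs i \<and> horizontal_edge vs i \<and> extreme_edge vs j \<and> horizontal_edge vs j \<and>
        a \<in> edge vs i \<and> b \<in> edge vs j) \<and>
     (\<exists>a b i j. sV = closed_segment a b \<and> i \<noteq> j \<and>
        extreme_edge vs i \<and> vertical_edge vs i \<and> extreme_edge vs j \<and> vertical_edge vs j \<and>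
        a \<in> edge vs i \<and> b \<in> edge vs j)"

definition has_cross :: "pt list \<Rightarrow> bool" where
  "has_cross vs \<longleftrightarrow> (\<exists>sH sV. is_cross vs sH sV)"

end

theory Submission
  imports Defs
begin

text \<open>
  A skeleton meets every vertical and every horizontal line through an interior point of the
  obstacle: every shortest rectilinear path between two points far outside the bounding box on
  such a line contains the segment joining them, so this segment, itself such a path, must hit
  the skeleton.
  By the Jordan curve theorem the obstacle is the closure of its interior, hence the skeleton
  covers the whole range of abscissae and of ordinates of the obstacle. Now let the skeleton
  consist of two segments. The absence of extreme corners forces its points on the sides of the
  bounding box to be segment endpoints; comparing abscissae and using vertical convexity then
  joins the top and the bottom side by a segment inside the obstacle, and likewise the left and
  the right side. These two segments form a cross.
\<close>

section \<open>Segments and linear functionals\<close>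

lemma linear_segment_bounds:
  fixes f :: "'a::real_vector \<Rightarrow> real"
  assumes "linear f" "z \<in> closed_segment u v"
  shows "min (f u) (f v) \<le> f z \<and> f z \<le> max (f u) (f v)"
proof -
  have "f z \<in> closed_segment (f u) (f v)"
    using assms by (simp add: closed_segment_linear_image)
  then show ?thesis by (auto simp: closed_segment_eq_real_ivl split: if_splits)
qed

lemma linear_constant_on_segment:
  fixes f :: "'a::real_vector \<Rightarrow> real"
  assumes "linear f" "z \<in> closed_segment u v" "f u = f v"
  shows "f z = f u"
  using linear_segment_bounds[OF assms(1,2)] assms(3) by auto

lemma linear_strict_bounds_open_segment:
  fixes f :: "'a::real_vector \<Rightarrow> real"
  assumes "linear f" "z \<in> open_segment u v" "f u \<noteq> f v"
  shows "min (f u) (f v) < f z \<and> f z < max (f u) (f v)"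
proof -
  obtain t where t: "0 < t" "t < 1" "z = (1 - t) *\<^sub>R u + t *\<^sub>R v"
    using assms(2) by (auto simp: in_segment)
  have "f z = (1 - t) * f u + t * f v"
    using t(3) by (simp add: linear_add[OF assms(1)] linear_scale[OF assms(1)])
  then have "f z \<in> open_segment (f u) (f v)"
    using t(1,2) assms(3) by (auto simp: in_segment)
  then show ?thesis by (auto simp: open_segment_eq_real_ivl split: if_splits)
qed

lemma segment_extremum_at_end:
  fixes f :: "'a::real_vector \<Rightarrow> real"
  assumes "linear f" "z \<in> closed_segment u v" "w \<in> closed_segment u v" "f w \<noteq> f z"
    and "(f u \<le> f z \<and> f v \<le> f z) \<or> (f z \<le> f u \<and> f z \<le> f v)"
  shows "z = u \<or> z = v"
proof (rule ccontr)
  assume "\<not> (z = u \<or> z = v)"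
  then have "z \<in> open_segment u v" using assms(2) by (simp add: open_segment_def)
  moreover have "f u \<noteq> f v"
    using linear_constant_on_segment[OF assms(1)] assms(2-4) by metis
  ultimately show False
    using linear_strict_bounds_open_segment[OF assms(1)] assms(5) by fastforce
qed

lemma closed_segment_same_fst:
  fixes a b :: "real \<times> real"
  assumes "fst a = fst b"
  shows "closed_segment a b = {z. fst z = fst a \<and> snd z \<in> closed_segment (snd a) (snd b)}"
proof -
  have "z \<in> closed_segment a b \<longleftrightarrow> fst z = fst a \<and> snd z \<in> closed_segment (snd a) (snd b)" for z
    using assms by (auto simp: in_segment prod_eq_iff algebra_simps)
  then show ?thesis by blast
qed

lemma closed_segment_same_snd:
  fixes a b :: "real \<times> real"
  assumes "snd a = snd b"
  shows "closed_segment a b = {z. snd z = snd a \<and> fst z \<in> closed_segment (fst a) (fst b)}"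
proof -
  have "z \<in> closed_segment a b \<longleftrightarrow> snd z = snd a \<and> fst z \<in> closed_segment (fst a) (fst b)" for z
    using assms by (auto simp: in_segment prod_eq_iff algebra_simps)
  then show ?thesis by blast
qed

lemma closed_segment_swap:
  "closed_segment (prod.swap a) (prod.swap b) = prod.swap ` closed_segment a b"
  by (rule closed_segment_linear_image) (simp add: linear_iff)

section \<open>Vertically convex sets\<close>

definition vertically_convex :: "pt set \<Rightarrow> bool" where
  "vertically_convex K \<longleftrightarrow> (\<forall>p\<in>K. \<forall>q\<in>K. fst p = fst q \<longrightarrow> closed_segment p q \<subseteq> K)"

definition horizontally_convex :: "pt set \<Rightarrow> bool" where
  "horizontally_convex K \<longleftrightarrow> (\<forall>p\<in>K. \<forall>q\<in>K. snd p = snd q \<longrightarrow> closed_segment p q \<subseteq> K)"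

lemma vertically_convex_swap:
  "vertically_convex (prod.swap ` K) \<longleftrightarrow> horizontally_convex K"
proof -
  have "closed_segment (prod.swap p) (prod.swap q) \<subseteq> prod.swap ` K \<longleftrightarrow> closed_segment p q \<subseteq> K"
    for p q :: pt
    by (simp add: closed_segment_swap inj_image_subset_iff)
  then show ?thesis
    unfolding vertically_convex_def horizontally_convex_def by auto
qed

lemma segment_point_above:
  fixes T B E z :: pt
  assumes z: "z \<in> closed_segment T B" and B: "fst B \<in> closed_segment (fst T) (fst E)"
    and "snd B \<le> snd E" "snd E \<le> snd T"
  obtains w where "w \<in> closed_segment T E" "fst w = fst z" "snd z \<le> snd w"
proof -
  obtain t where t: "0 \<le> t" "t \<le> 1" "z = (1 - t) *\<^sub>R T + t *\<^sub>R B"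
    using z by (auto simp: in_segment)
  obtain r where r: "0 \<le> r" "r \<le> 1" "fst B = (1 - r) * fst T + r * fst E"
    using B by (auto simp: in_segment)
  define w where "w = (1 - t * r) *\<^sub>R T + (t * r) *\<^sub>R E"
  have "w \<in> closed_segment T E"
    using t r unfolding w_def by (auto simp: in_segment intro!: exI[of _ "t * r"] mult_le_one)
  have "fst z = (1 - t) * fst T + t * fst B" "snd z = (1 - t) * snd T + t * snd B"
    using t(3) by simp_all
  moreover have "fst w = fst T + t * (r * (fst E - fst T))" "snd w = snd T - t * (r * (snd T - snd E))"
    by (simp_all add: w_def algebra_simps)
  moreover have "r * (fst E - fst T) = fst B - fst T" using r(3) by (simp add: algebra_simps)
  then have "t * (r * (fst E - fst T)) = t * (fst B - fst T)" by simp
  moreover have "r * (snd T - snd E) \<le> 1 * (snd T - snd B)"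
    using r(1,2) assms(3,4) by (intro mult_mono) auto
  then have "t * (r * (snd T - snd E)) \<le> t * (snd T - snd B)"
    using t(1) by (simp add: mult_left_mono)
  ultimately have "fst w = fst z" "snd z \<le> snd w" by (simp_all add: algebra_simps)
  then show thesis using that \<open>w \<in> closed_segment T E\<close> by blast
qed

lemma vertically_convex_sandwich:
  fixes T B E1 E2 :: pt
  assumes vconv: "vertically_convex K"
    and "closed_segment T E1 \<subseteq> K" "closed_segment B E2 \<subseteq> K"
    and "fst B \<in> closed_segment (fst T) (fst E1)" "fst T \<in> closed_segment (fst B) (fst E2)"
    and "snd B \<le> snd E1" "snd E1 \<le> snd T" "snd B \<le> snd E2" "snd E2 \<le> snd T"
  shows "closed_segment T B \<subseteq> K"
proof
  fix z assume z: "z \<in> closed_segment T B"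
  obtain w1 where w1: "w1 \<in> closed_segment T E1" "fst w1 = fst z" "snd z \<le> snd w1"
    using segment_point_above[OF z assms(4,6,7)] .
  \<comment> \<open>the point below [z] is found by applying the same lemma upside down\<close>
  let ?flip = "\<lambda>p :: pt. (fst p, - snd p)"
  have flip: "closed_segment (?flip a) (?flip b) = ?flip ` closed_segment a b" for a b
    by (rule closed_segment_linear_image) (simp add: linear_iff)
  have "?flip z \<in> closed_segment (?flip B) (?flip T)"
    using z by (simp add: flip closed_segment_commute)
  then obtain w where w: "w \<in> closed_segment (?flip B) (?flip E2)" "fst w = fst z" "- snd z \<le> snd w"
    using segment_point_above[of "?flip z" "?flip B" "?flip T" "?flip E2"] assms(5,8,9) by auto
  define w2 where "w2 = ?flip w"
  have w2: "w2 \<in> closed_segment B E2" "fst w2 = fst z" "snd w2 \<le> snd z"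
    using w flip[of B E2] by (auto simp: w2_def)
  have "z \<in> closed_segment w2 w1"
    using w1 w2 by (simp add: closed_segment_same_fst closed_segment_eq_real_ivl)
  moreover have "w1 \<in> K" "w2 \<in> K" using assms(2,3) w1(1) w2(1) by blast+
  then have "closed_segment w2 w1 \<subseteq> K"
    using vconv w1(2) w2(2) unfolding vertically_convex_def by simp
  ultimately show "z \<in> K" by blast
qed

section \<open>Two segments spanning a box without corners\<close>

lemma interval_covered_by_two_segments:
  fixes a b e1 e2 x0 x1 :: real
  assumes "{e1, e2} = {x0, x1}" "a \<in> {x0..x1}" "b \<in> {x0..x1}"
    and "{x0..x1} \<subseteq> closed_segment a e1 \<union> closed_segment b e2"
  shows "b \<in> closed_segment a e1 \<and> a \<in> closed_segment b e2"
proof -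
  have "(a + b) / 2 \<in> {x0..x1}" using assms(2,3) by auto
  then have mid: "(a + b) / 2 \<in> closed_segment a e1 \<union> closed_segment b e2"
    using assms(4) by blast
  consider "e1 = x0" "e2 = x1" | "e1 = x1" "e2 = x0"
    using assms(1) by (auto simp: doubleton_eq_iff)
  then show ?thesis
  proof cases
    case 1
    have "b \<le> a"
    proof (rule ccontr)
      assume "\<not> b \<le> a"
      then show False using mid 1 assms(2,3) by (auto simp: closed_segment_eq_real_ivl split: if_splits)
    qed
    then show ?thesis using 1 assms(2,3) by (auto simp: closed_segment_eq_real_ivl)
  next
    case 2
    have "a \<le> b"
    proof (rule ccontr)
      assume "\<not> a \<le> b"
      then show False using mid 2 assms(2,3) by (auto simp: closed_segment_eq_real_ivl split: if_splits)
    qed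
    then show ?thesis using 2 assms(2,3) by (auto simp: closed_segment_eq_real_ivl)
  qed
qed

text \<open>For an obstacle, [K] is the obstacle in its bounding box, and the absence of box corners in
  [K] is the absence of extreme corners.\<close>
locale box_without_corners =
  fixes K :: "pt set" and x0 x1 y0 y1 :: real
  assumes in_box: "K \<subseteq> {x0..x1} \<times> {y0..y1}"
    and no_box_corner: "\<And>z. z \<in> K \<Longrightarrow> fst z \<in> {x0, x1} \<Longrightarrow> snd z \<in> {y0, y1} \<Longrightarrow> False"
begin

lemma segment_between_sides:
  assumes seg: "closed_segment u v \<subseteq> K"
    and T: "T \<in> closed_segment u v" "snd T \<in> {y0, y1}"
    and L: "L \<in> closed_segment u v" "fst L \<in> {x0, x1}"
  shows "closed_segment u v = closed_segment T L"
proof -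
  have inK: "T \<in> K" "L \<in> K" "u \<in> K" "v \<in> K" using seg T L by auto
  then have box: "fst u \<in> {x0..x1}" "fst v \<in> {x0..x1}" "snd u \<in> {y0..y1}" "snd v \<in> {y0..y1}"
    using in_box by auto
  have "snd L \<noteq> snd T" "fst T \<noteq> fst L"
    using no_box_corner inK T(2) L(2) by metis+
  moreover have "T = u \<or> T = v"
    using segment_extremum_at_end[OF linear_snd T(1) L(1)] \<open>snd L \<noteq> snd T\<close> T(2) box by auto
  moreover have "L = u \<or> L = v"
    using segment_extremum_at_end[OF linear_fst L(1) T(1)] \<open>fst T \<noteq> fst L\<close> L(2) box by auto
  ultimately show ?thesis by auto
qed

lemma no_segment_through_three_sides:
  assumes "closed_segment u v \<subseteq> K" "T \<in> closed_segment u v" "snd T \<in> {y0, y1}"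
    and "L \<in> closed_segment u v" "fst L = x0" "R \<in> closed_segment u v" "fst R = x1"
  shows "x0 = x1"
proof -
  have "closed_segment T L = closed_segment T R"
    using segment_between_sides[of u v T L] segment_between_sides[of u v T R] assms by simp
  then have "L = R" by (auto simp: doubleton_eq_iff)
  then show ?thesis using assms(5,7) by simp
qed

text \<open>No segment reaches both vertical sides, so each segment joins its horizontal side to a
  vertical side, and to opposite ones. Covering all abscissae then forces the two segments to
  overlap in abscissa, and vertical convexity fills the region between them.\<close>
lemma transversal_between_segments:
  assumes vconv: "vertically_convex K" and "x0 < x1"
    and seg1: "closed_segment u1 v1 \<subseteq> K" and seg2: "closed_segment u2 v2 \<subseteq> K"
    and covers: "{x0..x1} \<subseteq> fst ` (closed_segment u1 v1 \<union> closed_segment u2 v2)"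
    and T: "T \<in> closed_segment u1 v1" "snd T = y1"
    and B: "B \<in> closed_segment u2 v2" "snd B = y0"
  shows "closed_segment T B \<subseteq> K"
proof -
  let ?A1 = "closed_segment u1 v1" and ?A2 = "closed_segment u2 v2"
  have "x0 \<in> fst ` (?A1 \<union> ?A2)" "x1 \<in> fst ` (?A1 \<union> ?A2)"
    using covers \<open>x0 < x1\<close> by auto
  then obtain L R where L: "L \<in> ?A1 \<union> ?A2" "fst L = x0" and R: "R \<in> ?A1 \<union> ?A2" "fst R = x1"
    by blast
  have "\<not> (L \<in> ?A1 \<and> R \<in> ?A1)"
    using no_segment_through_three_sides[OF seg1 T(1) _ _ L(2) _ R(2)] T(2) \<open>x0 < x1\<close> by auto
  moreover have "\<not> (L \<in> ?A2 \<and> R \<in> ?A2)"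
    using no_segment_through_three_sides[OF seg2 B(1) _ _ L(2) _ R(2)] B(2) \<open>x0 < x1\<close> by auto
  ultimately obtain E1 E2 where E: "E1 \<in> ?A1" "E2 \<in> ?A2" "{fst E1, fst E2} = {x0, x1}"
    using L R by blast
  have sides: "fst E1 \<in> {x0, x1}" "fst E2 \<in> {x0, x1}" using E(3) by blast+
  have A1: "?A1 = closed_segment T E1"
    using segment_between_sides[OF seg1 T(1) _ E(1) sides(1)] T(2) by simp
  have A2: "?A2 = closed_segment B E2"
    using segment_between_sides[OF seg2 B(1) _ E(2) sides(2)] B(2) by simp
  have "T \<in> K" "B \<in> K" "E1 \<in> K" "E2 \<in> K" using seg1 seg2 T(1) B(1) E(1,2) by blast+
  then have box: "fst T \<in> {x0..x1}" "fst B \<in> {x0..x1}"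
    "snd E1 \<in> {y0..y1}" "snd E2 \<in> {y0..y1}" using in_box by auto
  have "{x0..x1} \<subseteq> closed_segment (fst T) (fst E1) \<union> closed_segment (fst B) (fst E2)"
    using covers unfolding A1 A2 by (simp add: closed_segment_linear_image[OF linear_fst] image_Un)
  then have "fst B \<in> closed_segment (fst T) (fst E1) \<and> fst T \<in> closed_segment (fst B) (fst E2)"
    using interval_covered_by_two_segments[OF E(3) box(1,2)] by blast
  then show ?thesis
    using box(3,4) T(2) B(2)
    by (intro vertically_convex_sandwich[OF vconv seg1[unfolded A1] seg2[unfolded A2]]) auto
qed

lemma vertical_transversal:
  assumes vconv: "vertically_convex K"
    and seg1: "closed_segment u1 v1 \<subseteq> K" and seg2: "closed_segment u2 v2 \<subseteq> K"
    and covers_x: "{x0..x1} \<subseteq> fst ` (closed_segment u1 v1 \<union> closed_segment u2 v2)"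
    and covers_y: "{y0..y1} \<subseteq> snd ` (closed_segment u1 v1 \<union> closed_segment u2 v2)"
  shows "\<exists>T B. snd T = y1 \<and> snd B = y0 \<and> closed_segment T B \<subseteq> K"
proof -
  let ?A1 = "closed_segment u1 v1" and ?A2 = "closed_segment u2 v2"
  have "u1 \<in> K" using seg1 by auto
  then have "y0 \<le> y1" using in_box by auto
  then have "y1 \<in> snd ` (?A1 \<union> ?A2)" "y0 \<in> snd ` (?A1 \<union> ?A2)" using covers_y by auto
  then obtain T B where T: "T \<in> ?A1 \<union> ?A2" "snd T = y1" and B: "B \<in> ?A1 \<union> ?A2" "snd B = y0"
    by blast
  have "B \<in> K" using B(1) seg1 seg2 by blast
  then have "fst B \<in> {x0..x1}" "fst B \<notin> {x0, x1}"
    using in_box no_box_corner[of B] B(2) by auto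
  then have "x0 < x1" by auto
  consider "T \<in> ?A1" "B \<in> ?A1" | "T \<in> ?A2" "B \<in> ?A2" | "T \<in> ?A1" "B \<in> ?A2" | "T \<in> ?A2" "B \<in> ?A1"
    using T(1) B(1) by blast
  then have "closed_segment T B \<subseteq> K"
  proof cases
    case 1
    then show ?thesis using seg1 closed_segment_subset[OF 1] by blast
  next
    case 2
    then show ?thesis using seg2 closed_segment_subset[OF 2] by blast
  next
    case 3
    then show ?thesis
      using transversal_between_segments[OF vconv \<open>x0 < x1\<close> seg1 seg2 covers_x] T(2) B(2) by blast
  next
    case 4
    have "{x0..x1} \<subseteq> fst ` (?A2 \<union> ?A1)" using covers_x by (simp add: Un_commute)
    then show ?thesis
      using transversal_between_segments[OF vconv \<open>x0 < x1\<close> seg2 seg1] 4 T(2) B(2) by blast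
  qed
  then show ?thesis using T(2) B(2) by blast
qed

end

lemma box_without_corners_swap:
  assumes "box_without_corners K x0 x1 y0 y1"
  shows "box_without_corners (prod.swap ` K) y0 y1 x0 x1"
  using assms unfolding box_without_corners_def by fastforce

lemma (in box_without_corners) cross_of_transversals:
  assumes "vertically_convex K" "horizontally_convex K"
    and seg1: "closed_segment u1 v1 \<subseteq> K" and seg2: "closed_segment u2 v2 \<subseteq> K"
    and covers_x: "{x0..x1} \<subseteq> fst ` (closed_segment u1 v1 \<union> closed_segment u2 v2)"
    and covers_y: "{y0..y1} \<subseteq> snd ` (closed_segment u1 v1 \<union> closed_segment u2 v2)"
  obtains T B L R where "snd T = y1" "snd B = y0" "closed_segment T B \<subseteq> K"
    and "fst L = x0" "fst R = x1" "closed_segment L R \<subseteq> K"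
proof -
  obtain T B where TB: "snd T = y1" "snd B = y0" "closed_segment T B \<subseteq> K"
    using vertical_transversal assms by blast
  interpret swapped: box_without_corners "prod.swap ` K" y0 y1 x0 x1
    by (rule box_without_corners_swap) (rule box_without_corners_axioms)
  have "closed_segment (prod.swap u1) (prod.swap v1) \<subseteq> prod.swap ` K"
    "closed_segment (prod.swap u2) (prod.swap v2) \<subseteq> prod.swap ` K"
    using seg1 seg2 by (simp_all add: closed_segment_swap image_mono)
  moreover have "fst ` prod.swap ` A = snd ` A" "snd ` prod.swap ` A = fst ` A" for A :: "pt set"
    by force+
  ultimately obtain R' L' where RL': "snd R' = x1" "snd L' = x0"
    "closed_segment R' L' \<subseteq> prod.swap ` K"
    using swapped.vertical_transversal[of "prod.swap u1" "prod.swap v1" "prod.swap u2" "prod.swap v2"]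
      assms(1,2) covers_x covers_y
    by (auto simp: vertically_convex_swap closed_segment_swap image_Un)
  have "closed_segment (prod.swap R') (prod.swap L') = prod.swap ` closed_segment R' L'"
    by (rule closed_segment_swap)
  also have "\<dots> \<subseteq> prod.swap ` prod.swap ` K" using RL'(3) by (rule image_mono)
  finally have "closed_segment (prod.swap R') (prod.swap L') \<subseteq> K" by (simp add: image_image)
  then have "closed_segment (prod.swap L') (prod.swap R') \<subseteq> K" by (subst closed_segment_commute)
  moreover have "fst (prod.swap L') = x0" "fst (prod.swap R') = x1" using RL'(1,2) by simp_all
  ultimately show thesis using that TB by blast
qed

section \<open>Rectilinear paths\<close>

lemma Suc_less_length_Cons2:
  "{i. Suc i < length (a # b # ps)} = insert 0 (Suc ` {i. Suc i < length (b # ps)})"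
  by (auto simp: image_iff) (metis Suc_less_eq less_Suc_eq_0_disj nat.exhaust)

lemma path_set_single: "path_set [a] = {a}"
  by (simp add: path_set_def)

lemma pseg_Union_Cons2:
  "(\<Union>i\<in>{i. Suc i < length (a # b # ps)}. pseg (a # b # ps) i) =
   closed_segment a b \<union> (\<Union>i\<in>{i. Suc i < length (b # ps)}. pseg (b # ps) i)"
  unfolding Suc_less_length_Cons2 by (auto simp: pseg_def)

lemma path_set_Cons2: "path_set (a # b # ps) = closed_segment a b \<union> path_set (b # ps)"
  unfolding path_set_def pseg_Union_Cons2 by auto

lemma rlen_Cons2: "rlen (a # b # ps) = l1dist a b + rlen (b # ps)"
proof -
  have "0 \<notin> Suc ` {i. Suc i < length (b # ps)}" by auto
  then show ?thesis unfolding rlen_def Suc_less_length_Cons2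
    by (simp add: sum.reindex)
qed

lemma connected_path_set: "ps \<noteq> [] \<Longrightarrow> connected (path_set ps)"
proof (induction ps rule: induct_list012)
  case (3 a b ps)
  have "b \<in> closed_segment a b" "b \<in> path_set (b # ps)" by (auto simp: path_set_def)
  then show ?case using "3.IH"(2) by (auto simp: path_set_Cons2 intro!: connected_Un)
qed (auto simp: path_set_single)

lemma rlen_deviation_bound:
  fixes f g :: "pt \<Rightarrow> real"
  assumes l1: "\<And>a b. l1dist a b = \<bar>f b - f a\<bar> + \<bar>g b - g a\<bar>" and "linear f"
    and "z \<in> path_set ps"
  shows "\<bar>g (last ps) - g (hd ps)\<bar> + \<bar>f z - f (hd ps)\<bar> \<le> rlen ps"
  using assms(3)
proof (induction ps arbitrary: z rule: induct_list012)
  case (2 a)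
  then show ?case by (simp add: path_set_single rlen_def)
next
  case (3 a b ps)
  have IH_b: "\<bar>g (last (b # ps)) - g b\<bar> \<le> rlen (b # ps)"
    using "3.IH"(2)[of b] by (simp add: path_set_def)
  show ?case
  proof (cases "z \<in> closed_segment a b")
    case True
    then have "\<bar>f z - f a\<bar> \<le> \<bar>f b - f a\<bar>"
      using linear_segment_bounds[OF \<open>linear f\<close>] by fastforce
    then show ?thesis using IH_b by (simp add: rlen_Cons2 l1)
  next
    case False
    then have "z \<in> path_set (b # ps)" using "3.prems" by (simp add: path_set_Cons2)
    then have "\<bar>g (last (b # ps)) - g b\<bar> + \<bar>f z - f b\<bar> \<le> rlen (b # ps)" using "3.IH"(2) by simp
    moreover have "\<bar>g (last (b # ps)) - g a\<bar> + \<bar>f z - f a\<bar> \<le>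
        (\<bar>f b - f a\<bar> + \<bar>g b - g a\<bar>) + (\<bar>g (last (b # ps)) - g b\<bar> + \<bar>f z - f b\<bar>)"
      by arith
    ultimately show ?thesis by (simp add: rlen_Cons2 l1)
  qed
qed (simp add: path_set_def)

text \<open>By the length bound the path cannot leave the line through [p] and [q]; being connected,
  it then covers the segment between them.\<close>
lemma shortest_rect_path_level_segment:
  fixes f g :: "pt \<Rightarrow> real"
  assumes l1: "\<And>a b. l1dist a b = \<bar>f b - f a\<bar> + \<bar>g b - g a\<bar>"
    and lf: "linear f" and lg: "linear g" and inj: "\<And>z w. f z = f w \<Longrightarrow> g z = g w \<Longrightarrow> z = w"
    and sp: "shortest_rect_path ps p q" and fpq: "f p = f q"
  shows "closed_segment p q \<subseteq> path_set ps"
proof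
  fix w assume w: "w \<in> closed_segment p q"
  have ne: "ps \<noteq> []" and pq: "hd ps = p" "last ps = q" and len: "rlen ps = l1dist p q"
    using sp by (auto simp: shortest_rect_path_def rect_path_def)
  have level: "f z = f p" if "z \<in> path_set ps" for z
    using rlen_deviation_bound[OF l1 lf that] pq len fpq by (simp add: l1)
  have "p \<in> path_set ps" "q \<in> path_set ps"
    using pq ne by (auto simp: path_set_def)
  moreover have "convex (g ` path_set ps)"
    using connected_path_set[OF ne] lg
    by (simp add: is_interval_convex_1[symmetric] is_interval_connected_1 connected_linear_image)
  ultimately have "closed_segment (g p) (g q) \<subseteq> g ` path_set ps"
    by (simp add: closed_segment_subset)
  moreover have "g w \<in> closed_segment (g p) (g q)"
    using w by (simp add: closed_segment_linear_image[OF lg])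
  ultimately obtain z where z: "z \<in> path_set ps" "g z = g w" by auto
  moreover have "f w = f p"
    using linear_constant_on_segment[OF lf w fpq] .
  ultimately have "z = w" using inj level by metis
  then show "w \<in> path_set ps" using z by simp
qed

lemma shortest_rect_path_aligned:
  assumes sp: "shortest_rect_path ps p q" and aligned: "fst p = fst q \<or> snd p = snd q"
  shows "closed_segment p q \<subseteq> path_set ps"
proof (cases "fst p = fst q")
  case True
  show ?thesis
    by (rule shortest_rect_path_level_segment[OF _ linear_fst linear_snd _ sp True])
      (auto simp: l1dist_def prod_eq_iff)
next
  case False
  then have "snd p = snd q" using aligned by simp
  show ?thesis
    by (rule shortest_rect_path_level_segment[OF _ linear_snd linear_fst _ sp \<open>snd p = snd q\<close>])
      (auto simp: l1dist_def prod_eq_iff)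
qed

lemma segment_in_one_corner_paths:
  assumes "fst p = fst q \<or> snd p = snd q"
  shows "closed_segment p q \<in> one_corner_paths p q"
proof -
  have "shortest_rect_path [p, q] p q"
    using assms by (auto simp: shortest_rect_path_def rect_path_def rlen_Cons2 rlen_def)
  moreover have "corners [p, q] = {}" by (auto simp: corners_def)
  moreover have "closed_segment p q = path_set [p, q]"
    by (auto simp: path_set_Cons2 path_set_single)
  ultimately show ?thesis
    unfolding one_corner_paths_def by (intro CollectI exI[of _ "[p, q]"]) simp
qed

lemma rect_convex_region:
  assumes "rect_convex vs"
  shows "vertically_convex (region vs)" "horizontally_convex (region vs)"
proof -
  have "closed_segment p q \<subseteq> region vs"
    if pq: "p \<in> region vs" "q \<in> region vs" "fst p = fst q \<or> snd p = snd q" for p q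
  proof -
    obtain ps where "shortest_rect_path ps p q" "path_set ps \<subseteq> region vs"
      using assms pq(1,2) unfolding rect_convex_def by blast
    then show ?thesis using shortest_rect_path_aligned pq(3) by blast
  qed
  then show "vertically_convex (region vs)" "horizontally_convex (region vs)"
    unfolding vertically_convex_def horizontally_convex_def by blast+
qed

section \<open>The Jordan curve theorem for polygons\<close>

lemma inside_linear_image:
  fixes h :: "'a::euclidean_space \<Rightarrow> 'b::euclidean_space"
  assumes lh: "linear h" and lg: "linear g" and gh: "\<And>x. g (h x) = x" and hg: "\<And>y. h (g y) = y"
  shows "inside (h ` S) = h ` inside S"
proof -
  have cont: "continuous_on A h" "continuous_on B g" for A B
    using lh lg by (simp_all add: linear_continuous_on linear_conv_bounded_linear)
  have "bij h" "bij g"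
    by (rule o_bij[where g = g], simp_all add: fun_eq_iff gh hg)
      (rule o_bij[where g = h], simp_all add: fun_eq_iff gh hg)
  then have "h ` (- S) = - (h ` S)" "g ` (- (h ` S)) = - S"
    using gh by (simp_all add: bij_image_Compl_eq image_image)
  then have "homeomorphism (- S) (- (h ` S)) h g"
    using gh hg cont by (simp add: homeomorphism_def)
  then have cc: "connected_component_set (- (h ` S)) (h x) = h ` connected_component_set (- S) x"
    if "x \<notin> S" for x
    using that by (simp add: connected_component_set_homeomorphism)
  have bounded: "bounded (h ` A) \<longleftrightarrow> bounded A" for A
  proof
    assume "bounded (h ` A)"
    then have "bounded (g ` h ` A)" using lg by (simp add: bounded_linear_image linear_conv_bounded_linear)
    then show "bounded A" using gh by (simp add: image_image)
  qed (use lh in \<open>simp add: bounded_linear_image linear_conv_bounded_linear\<close>)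
  have "inj h" by (metis gh injI)
  then have mem: "h x \<in> inside (h ` S) \<longleftrightarrow> x \<in> inside S" for x
    using cc[of x] bounded unfolding inside_def by (auto simp: inj_image_mem_iff)
  show ?thesis
  proof (intro subset_antisym subsetI)
    fix y assume "y \<in> inside (h ` S)"
    then show "y \<in> h ` inside S" using mem[of "g y"] hg by (metis image_eqI)
  qed (use mem in auto)
qed

definition complex_of_pt :: "pt \<Rightarrow> complex" where
  "complex_of_pt z = Complex (fst z) (snd z)"

definition pt_of_complex :: "complex \<Rightarrow> pt" where
  "pt_of_complex w = (Re w, Im w)"

lemma linear_complex_of_pt: "linear complex_of_pt"
  by (simp add: linear_iff complex_of_pt_def complex_eq_iff)

lemma linear_pt_of_complex: "linear pt_of_complex"
  by (simp add: linear_iff pt_of_complex_def)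

lemma pt_of_complex_of_pt [simp]: "pt_of_complex (complex_of_pt z) = z"
  by (simp add: pt_of_complex_def complex_of_pt_def)

lemma complex_of_pt_of_complex [simp]: "complex_of_pt (pt_of_complex w) = w"
  by (simp add: pt_of_complex_def complex_of_pt_def)

lemma Jordan_inside_pt:
  fixes c :: "real \<Rightarrow> pt"
  assumes "simple_path c" "pathfinish c = pathstart c"
  shows "connected (inside (path_image c))" "path_image c \<subseteq> closure (inside (path_image c))"
proof -
  let ?c = "complex_of_pt \<circ> c"
  have "inj complex_of_pt" by (metis injI pt_of_complex_of_pt)
  then have "simple_path ?c" "pathfinish ?c = pathstart ?c"
    using assms simple_path_linear_image_eq[OF linear_complex_of_pt]
    by (simp_all add: pathfinish_compose pathstart_compose)
  note Jordan = Jordan_inside_outside[OF this]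
  have img: "path_image ?c = complex_of_pt ` path_image c"
    by (rule path_image_compose)
  have "inside (path_image ?c) = complex_of_pt ` inside (path_image c)"
    unfolding img by (rule inside_linear_image[OF linear_complex_of_pt linear_pt_of_complex]) simp_all
  then have ins: "inside (path_image c) = pt_of_complex ` inside (path_image ?c)"
    by (simp add: image_image)
  have cont: "continuous_on A pt_of_complex" for A
    using linear_pt_of_complex by (simp add: linear_continuous_on linear_conv_bounded_linear)
  show "connected (inside (path_image c))"
    unfolding ins using Jordan by (intro connected_continuous_image cont) auto
  have "path_image c = pt_of_complex ` frontier (inside (path_image ?c))"
    using Jordan unfolding img by (simp add: image_image)
  also have "\<dots> \<subseteq> pt_of_complex ` closure (inside (path_image ?c))"
    by (simp add: frontier_def image_mono)
  also have "\<dots> \<subseteq> closure (inside (path_image c))"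
    unfolding ins by (rule image_closure_subset[OF cont]) (auto intro: closure_subset [THEN subsetD])
  finally show "path_image c \<subseteq> closure (inside (path_image c))" .
qed

fun polychain :: "pt list \<Rightarrow> real \<Rightarrow> pt" where
  "polychain [] = linepath 0 0"
| "polychain [a] = linepath a a"
| "polychain [a, b] = linepath a b"
| "polychain (a # b # c # ps) = linepath a b +++ polychain (b # c # ps)"

lemma polychain_props:
  assumes "length ps \<ge> 2"
  shows "pathstart (polychain ps) = hd ps \<and> pathfinish (polychain ps) = last ps \<and>
    path_image (polychain ps) = (\<Union>i\<in>{i. Suc i < length ps}. pseg ps i)"
  using assms
proof (induction ps rule: polychain.induct)
  case (3 a b)
  have "{i. Suc i < length [a, b]} = {0}" by auto
  then show ?case by (simp add: pseg_def)
next
  case (4 a b c ps)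
  then have IH: "pathstart (polychain (b # c # ps)) = b"
    "pathfinish (polychain (b # c # ps)) = last (c # ps)"
    "path_image (polychain (b # c # ps)) = (\<Union>i\<in>{i. Suc i < length (b # c # ps)}. pseg (b # c # ps) i)"
    by auto
  have "path_image (polychain (a # b # c # ps)) = closed_segment a b \<union> path_image (polychain (b # c # ps))"
    using IH(1) by (simp add: path_image_join)
  then show ?case using IH by (simp only: pseg_Union_Cons2) simp
qed auto

definition simple_polychain :: "pt list \<Rightarrow> bool" where
  "simple_polychain ps \<longleftrightarrow> (\<forall>i. Suc i < length ps \<longrightarrow> ps ! i \<noteq> ps ! Suc i) \<and>
     (\<forall>i j. i < j \<longrightarrow> Suc j < length ps \<longrightarrow>
        pseg ps i \<inter> pseg ps j \<subseteq> (if j = Suc i then {ps ! j} else {}))"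

lemma simple_polychain_Cons:
  assumes "simple_polychain (a # ps)"
  shows "simple_polychain ps"
proof -
  have distinct: "\<forall>i. Suc i < length (a # ps) \<longrightarrow> (a # ps) ! i \<noteq> (a # ps) ! Suc i"
    and meet: "\<forall>i j. i < j \<longrightarrow> Suc j < length (a # ps) \<longrightarrow> pseg (a # ps) i \<inter> pseg (a # ps) j
      \<subseteq> (if j = Suc i then {(a # ps) ! j} else {})"
    using assms unfolding simple_polychain_def by blast+
  have pseg: "pseg (a # ps) (Suc i) = pseg ps i" for i by (simp add: pseg_def)
  show ?thesis unfolding simple_polychain_def
  proof (intro conjI allI impI)
    fix i assume "Suc i < length ps"
    then show "ps ! i \<noteq> ps ! Suc i" using distinct[rule_format, of "Suc i"] by simp
  next
    fix i j assume "i < j" "Suc j < length ps"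
    then show "pseg ps i \<inter> pseg ps j \<subseteq> (if j = Suc i then {ps ! j} else {})"
      using meet[rule_format, of "Suc i" "Suc j"] unfolding pseg nth_Cons_Suc
      by (cases "j = Suc i") auto
  qed
qed

lemma arc_polychain:
  assumes "length ps \<ge> 2" "simple_polychain ps"
  shows "arc (polychain ps)"
  using assms
proof (induction ps rule: polychain.induct)
  case (3 a b)
  then show ?case by (auto simp: simple_polychain_def)
next
  case (4 a b c ps)
  let ?ps = "a # b # c # ps"
  have IH: "arc (polychain (b # c # ps))" using 4 simple_polychain_Cons by auto
  have ab: "a \<noteq> b" using "4.prems"(2) by (auto simp: simple_polychain_def)
  have meet: "\<forall>i j. i < j \<longrightarrow> Suc j < length ?ps \<longrightarrow> pseg ?ps i \<inter> pseg ?ps j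
      \<subseteq> (if j = Suc i then {?ps ! j} else {})"
    using "4.prems"(2) unfolding simple_polychain_def by blast
  have "closed_segment a b \<inter> path_image (polychain (b # c # ps)) \<subseteq> {b}"
  proof
    fix z assume z: "z \<in> closed_segment a b \<inter> path_image (polychain (b # c # ps))"
    then obtain j where j: "Suc j < length (b # c # ps)" "z \<in> pseg ?ps (Suc j)"
      using polychain_props[of "b # c # ps"] by (auto simp: pseg_def)
    moreover have "z \<in> pseg ?ps 0" using z by (simp add: pseg_def)
    ultimately have "z \<in> (if Suc j = Suc 0 then {?ps ! Suc j} else {})"
      using meet[rule_format, of 0 "Suc j"] by (cases "j = 0") auto
    then show "z \<in> {b}" by (simp split: if_splits)
  qed
  then show ?case
    using arc_join[OF arc_linepath[OF ab] IH] polychain_props[of "b # c # ps"] by simp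
qed auto

lemma vtx_mod [simp]: "vtx vs (k mod length vs) = vtx vs k"
  by (simp add: vtx_def)

lemma edge_mod [simp]: "edge vs (k mod length vs) = edge vs k"
  by (simp add: edge_def vtx_def mod_Suc_eq)

lemma vtx_in_set: "vs \<noteq> [] \<Longrightarrow> vtx vs k \<in> set vs"
  by (simp add: vtx_def)

lemma vtx_eq_iff:
  assumes "distinct vs" "vs \<noteq> []"
  shows "vtx vs a = vtx vs b \<longleftrightarrow> a mod length vs = b mod length vs"
  using assms by (simp add: vtx_def nth_eq_iff_index_eq)

lemma edge_subset_region: "i < length vs \<Longrightarrow> edge vs i \<subseteq> region vs"
  by (auto simp: region_def poly_boundary_def)

lemma simple_polygon_edges_meet:
  assumes sp: "simple_polygon vs" and ij: "i < length vs" "j < length vs" "i \<noteq> j"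
    and z: "z \<in> edge vs i" "z \<in> edge vs j"
  shows "j = Suc i mod length vs \<and> z = vtx vs j \<or> i = Suc j mod length vs \<and> z = vtx vs i"
proof -
  let ?n = "length vs"
  have adjacent: "edge vs k \<inter> edge vs (Suc k) = {vtx vs (Suc k)}" if "k < ?n" for k
    using sp that by (simp add: simple_polygon_def)
  consider "j = Suc i mod ?n" | "i = Suc j mod ?n" | "j \<noteq> Suc i mod ?n" "i \<noteq> Suc j mod ?n"
    by blast
  then show ?thesis
  proof cases
    case 1
    then have "z = vtx vs (Suc i)" using adjacent[OF ij(1)] z edge_mod[of vs "Suc i"] by auto
    then show ?thesis using 1 by simp
  next
    case 2
    then have "z = vtx vs (Suc j)" using adjacent[OF ij(2)] z edge_mod[of vs "Suc j"] by auto
    then show ?thesis using 2 by simp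
  next
    case 3
    then have "edge vs i \<inter> edge vs j = {}" using sp ij by (simp add: simple_polygon_def)
    then show ?thesis using z by blast
  qed
qed

lemma simple_polygon_simple_polychain:
  assumes sp: "simple_polygon vs"
  shows "simple_polychain vs"
  unfolding simple_polychain_def
proof (intro conjI allI impI)
  have dist: "distinct vs" using sp by (simp add: simple_polygon_def)
  fix i assume "Suc i < length vs"
  then show "vs ! i \<noteq> vs ! Suc i" using dist by (simp add: nth_eq_iff_index_eq)
next
  fix i j assume ij: "i < j" "Suc j < length vs"
  have pseg: "pseg vs k = edge vs k" if "Suc k < length vs" for k
    using that by (simp add: pseg_def edge_def vtx_def)
  show "pseg vs i \<inter> pseg vs j \<subseteq> (if j = Suc i then {vs ! j} else {})"
  proof
    fix z assume "z \<in> pseg vs i \<inter> pseg vs j"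
    then have "j = Suc i mod length vs \<and> z = vtx vs j \<or> i = Suc j mod length vs \<and> z = vtx vs i"
      using simple_polygon_edges_meet[OF sp, of i j z] ij pseg[of i] pseg[of j] by auto
    then show "z \<in> (if j = Suc i then {vs ! j} else {})"
      using ij by (auto simp: vtx_def)
  qed
qed

lemma poly_boundary_simple_loop:
  assumes sp: "simple_polygon vs"
  obtains c where "simple_path c" "pathfinish c = pathstart c" "path_image c = poly_boundary vs"
proof
  let ?n = "length vs" and ?c = "polychain vs +++ linepath (last vs) (hd vs)"
  have n3: "?n \<ge> 3" and dist: "distinct vs" using sp by (auto simp: simple_polygon_def)
  have chain: "pathstart (polychain vs) = hd vs" "pathfinish (polychain vs) = last vs"
    "path_image (polychain vs) = (\<Union>i\<in>{i. Suc i < ?n}. edge vs i)"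
    using polychain_props[of vs] n3 by (auto simp: pseg_def edge_def vtx_def)
  have ne: "vs \<noteq> []" using n3 by auto
  have last: "last vs = vtx vs (?n - 1)" and hd: "hd vs = vtx vs 0"
    using n3 by (auto simp: vtx_def last_conv_nth[OF ne] hd_conv_nth[OF ne])
  have wrap: "Suc (?n - 1) = ?n" using n3 by simp
  then have closing: "closed_segment (last vs) (hd vs) = edge vs (?n - 1)"
    by (simp add: last hd edge_def vtx_def)
  have "?n - 1 < ?n" "0 < ?n" "?n - 1 \<noteq> 0" using n3 by auto
  then have "last vs \<noteq> hd vs"
    using dist by (simp add: last hd vtx_def nth_eq_iff_index_eq)
  moreover have "path_image (polychain vs) \<inter> closed_segment (last vs) (hd vs) \<subseteq> {hd vs, last vs}"
  proof
    fix z assume "z \<in> path_image (polychain vs) \<inter> closed_segment (last vs) (hd vs)"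
    then obtain i where i: "Suc i < ?n" "z \<in> edge vs i" "z \<in> edge vs (?n - 1)"
      using chain(3) closing by auto
    then have "?n - 1 = Suc i mod ?n \<and> z = vtx vs (?n - 1) \<or> i = Suc (?n - 1) mod ?n \<and> z = vtx vs i"
      using simple_polygon_edges_meet[OF sp, of i "?n - 1" z] by auto
    moreover have "Suc (?n - 1) mod ?n = 0" unfolding wrap by simp
    ultimately show "z \<in> {hd vs, last vs}" using last hd by auto
  qed
  ultimately show "simple_path ?c"
    using arc_polychain[OF _ simple_polygon_simple_polychain[OF sp]] n3 chain
    by (intro simple_path_join_loop) auto
  show "pathfinish ?c = pathstart ?c" using chain by simp
  have "{i. i < ?n} = insert (?n - 1) {i. Suc i < ?n}" using n3 by auto
  then show "path_image ?c = poly_boundary vs"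
    using chain by (auto simp: path_image_join closing poly_boundary_def lessThan_def)
qed

lemma compact_poly_boundary: "compact (poly_boundary vs)"
  unfolding poly_boundary_def edge_def by (intro compact_UN) auto

lemma region_eq_closure_inside:
  assumes "simple_polygon vs"
  shows "region vs = closure (inside (poly_boundary vs))"
proof -
  obtain c where c: "simple_path c" "pathfinish c = pathstart c" "path_image c = poly_boundary vs"
    using poly_boundary_simple_loop[OF assms] .
  have "closed (poly_boundary vs)" by (simp add: compact_imp_closed compact_poly_boundary)
  then show ?thesis
    using Jordan_inside_pt(2)[OF c(1,2)] closure_inside_subset closure_subset
    unfolding region_def c(3) by blast
qed

lemma connected_region:
  assumes "simple_polygon vs"
  shows "connected (region vs)"
proof -
  obtain c where c: "simple_path c" "pathfinish c = pathstart c" "path_image c = poly_boundary vs"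
    using poly_boundary_simple_loop[OF assms] .
  show ?thesis
    using Jordan_inside_pt(1)[OF c(1,2)] c(3) region_eq_closure_inside[OF assms]
    by (simp add: connected_imp_connected_closure)
qed

lemma inside_subset_interior_region: "inside (poly_boundary vs) \<subseteq> interior (region vs)"
proof -
  have "open (inside (poly_boundary vs))"
    by (simp add: open_inside compact_imp_closed compact_poly_boundary)
  then show ?thesis by (intro interior_maximal) (auto simp: region_def)
qed

lemma compact_region: "compact (region vs)"
proof -
  have B: "closed (poly_boundary vs)" "bounded (poly_boundary vs)"
    using compact_poly_boundary compact_imp_closed compact_imp_bounded by auto
  then have "closure (region vs) \<subseteq> region vs"
    using closure_inside_subset[of "poly_boundary vs"] unfolding region_def closure_Un by auto
  then have "closed (region vs)" by (simp add: closure_subset_eq)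
  moreover have "bounded (region vs)" using B bounded_inside by (simp add: region_def)
  ultimately show ?thesis by (simp add: compact_eq_bounded_closed)
qed

section \<open>Bounding box and extreme edges\<close>

definition xmin :: "pt list \<Rightarrow> real" where "xmin vs = Inf (fst ` region vs)"
definition xmax :: "pt list \<Rightarrow> real" where "xmax vs = Sup (fst ` region vs)"
definition ymin :: "pt list \<Rightarrow> real" where "ymin vs = Inf (snd ` region vs)"
definition ymax :: "pt list \<Rightarrow> real" where "ymax vs = Sup (snd ` region vs)"

lemma bbox_region: "bbox (region vs) = {xmin vs..xmax vs} \<times> {ymin vs..ymax vs}"
  by (auto simp: bbox_def xmin_def xmax_def ymin_def ymax_def)

lemma region_nonempty:
  assumes "simple_polygon vs"
  shows "region vs \<noteq> {}"
proof -
  have "0 < length vs" using assms by (auto simp: simple_polygon_def)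
  then have "vtx vs 0 \<in> region vs" using edge_subset_region[of 0 vs] by (auto simp: edge_def)
  then show ?thesis by blast
qed

lemma projection_region_interval:
  fixes f :: "pt \<Rightarrow> real"
  assumes "simple_polygon vs" "linear f"
  shows "f ` region vs = {Inf (f ` region vs)..Sup (f ` region vs)}"
proof -
  have "continuous_on (region vs) f"
    using assms(2) by (simp add: linear_continuous_on linear_conv_bounded_linear)
  then have "connected (f ` region vs)" "compact (f ` region vs)"
    using connected_continuous_image connected_region[OF assms(1)]
      compact_continuous_image compact_region by blast+
  then obtain a b where ab: "f ` region vs = {a..b}"
    using connected_compact_interval_1 by blast
  have "{a..b} \<noteq> {}" unfolding ab[symmetric] using region_nonempty[OF assms(1)] by blast
  then have "a \<le> b" by simp
  then show ?thesis using ab by simp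
qed

lemma fst_region: "simple_polygon vs \<Longrightarrow> fst ` region vs = {xmin vs..xmax vs}"
  using projection_region_interval[OF _ linear_fst] by (simp add: xmin_def xmax_def)

lemma snd_region: "simple_polygon vs \<Longrightarrow> snd ` region vs = {ymin vs..ymax vs}"
  using projection_region_interval[OF _ linear_snd] by (simp add: ymin_def ymax_def)

lemma region_subset_bbox:
  assumes "simple_polygon vs"
  shows "region vs \<subseteq> {xmin vs..xmax vs} \<times> {ymin vs..ymax vs}"
proof
  fix z assume "z \<in> region vs"
  then have "fst z \<in> fst ` region vs" "snd z \<in> snd ` region vs" by simp_all
  then show "z \<in> {xmin vs..xmax vs} \<times> {ymin vs..ymax vs}"
    using fst_region[OF assms] snd_region[OF assms] by (simp add: mem_Times_iff)
qed

lemma side_point_frontier_bbox: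
  assumes "simple_polygon vs" "w \<in> region vs"
    and "fst w \<in> {xmin vs, xmax vs} \<or> snd w \<in> {ymin vs, ymax vs}"
  shows "w \<in> frontier (bbox (region vs))"
proof -
  have "closed (bbox (region vs))" by (simp add: bbox_region closed_Times)
  moreover have "interior (bbox (region vs)) = {xmin vs<..<xmax vs} \<times> {ymin vs<..<ymax vs}"
    by (simp add: bbox_region interior_Times)
  ultimately show ?thesis
    using assms region_subset_bbox[OF assms(1)] by (auto simp: frontier_def bbox_region)
qed

lemma mod_add_neq:
  fixes k d n :: nat
  assumes "0 < d" "d < n"
  shows "(k + d) mod n \<noteq> k mod n"
proof
  assume "(k + d) mod n = k mod n"
  then have "n dvd d" using mod_eq_dvd_iff_nat[of k "k + d" n] by simp
  then show False using assms by (simp add: nat_dvd_not_less)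
qed

lemma collinear_same_fst:
  fixes a b c :: pt
  assumes "fst a = fst b" "fst b = fst c"
  shows "collinear {a, b, c}"
  unfolding collinear_def
  by (rule exI[of _ "(0, 1)"]) (use assms in \<open>auto intro!: exI simp: prod_eq_iff\<close>)

lemma collinear_same_snd:
  fixes a b c :: pt
  assumes "snd a = snd b" "snd b = snd c"
  shows "collinear {a, b, c}"
  unfolding collinear_def
  by (rule exI[of _ "(1, 0)"]) (use assms in \<open>auto intro!: exI simp: prod_eq_iff\<close>)

lemma consecutive_vertices_distinct:
  assumes "simple_polygon vs"
  shows "vtx vs (k + length vs - 1) \<noteq> vtx vs k" "vtx vs k \<noteq> vtx vs (Suc k)"
    "vtx vs (k + length vs - 1) \<noteq> vtx vs (Suc k)"
proof -
  let ?n = "length vs"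
  have n3: "?n \<ge> 3" and dist: "distinct vs" using assms by (auto simp: simple_polygon_def)
  have prev_eq: "k + ?n - 1 = k + (?n - 1)" "k + ?n - 1 = Suc k + (?n - 2)" using n3 by simp_all
  have "(k + ?n - 1) mod ?n \<noteq> k mod ?n"
    unfolding prev_eq(1) using mod_add_neq[of "?n - 1" ?n k] n3 by simp
  moreover have "Suc k mod ?n \<noteq> k mod ?n" using mod_add_neq[of 1 ?n k] n3 by simp
  moreover have "(k + ?n - 1) mod ?n \<noteq> Suc k mod ?n"
    unfolding prev_eq(2) using mod_add_neq[of "?n - 2" ?n "Suc k"] n3 by simp
  moreover have "vs \<noteq> []" using n3 by auto
  ultimately show "vtx vs (k + ?n - 1) \<noteq> vtx vs k" "vtx vs k \<noteq> vtx vs (Suc k)"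
    "vtx vs (k + ?n - 1) \<noteq> vtx vs (Suc k)"
    by (simp_all add: vtx_eq_iff[OF dist])
qed

text \<open>In general position consecutive edges cannot be parallel.\<close>
lemma vertex_on_horizontal_and_vertical_edge:
  assumes ob: "obstacle vs" and rl: "rectilinear vs"
  shows "\<exists>i<length vs. horizontal_edge vs i \<and> vtx vs k \<in> edge vs i"
    "\<exists>i<length vs. vertical_edge vs i \<and> vtx vs k \<in> edge vs i"
proof -
  let ?n = "length vs"
  have sp: "simple_polygon vs" and gp: "general_position vs" using ob by (simp_all add: obstacle_def)
  then have n3: "?n \<ge> 3" by (simp add: simple_polygon_def)
  then have ne: "vs \<noteq> []" by auto
  define prev where "prev = (k + ?n - 1) mod ?n"
  define cur where "cur = k mod ?n"
  have idx: "prev < ?n" "cur < ?n" using ne by (simp_all add: prev_def cur_def)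
  have "Suc (k + ?n - 1) = k + ?n" using n3 by simp
  then have "Suc prev mod ?n = k mod ?n" by (simp add: prev_def mod_Suc_eq)
  then have ends: "vtx vs prev = vtx vs (k + ?n - 1)" "vtx vs (Suc prev) = vtx vs k"
    "vtx vs cur = vtx vs k" "vtx vs (Suc cur) = vtx vs (Suc k)"
    by (simp_all add: prev_def cur_def vtx_def mod_Suc_eq)
  then have on: "vtx vs k \<in> edge vs prev" "vtx vs k \<in> edge vs cur"
    by (simp_all add: edge_def)
  have "\<not> collinear {vtx vs (k + ?n - 1), vtx vs k, vtx vs (Suc k)}"
    using gp vtx_in_set[OF ne] consecutive_vertices_distinct[OF sp] unfolding general_position_def
    by blast
  then have "\<not> (vertical_edge vs prev \<and> vertical_edge vs cur)"
    "\<not> (horizontal_edge vs prev \<and> horizontal_edge vs cur)"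
    using collinear_same_fst[of "vtx vs (k + ?n - 1)" "vtx vs k" "vtx vs (Suc k)"]
      collinear_same_snd[of "vtx vs (k + ?n - 1)" "vtx vs k" "vtx vs (Suc k)"] ends
    by (auto simp: vertical_edge_def horizontal_edge_def)
  moreover have "horizontal_edge vs i \<or> vertical_edge vs i" if "i < ?n" for i
    using rl that by (auto simp: rectilinear_def horizontal_edge_def vertical_edge_def)
  ultimately show "\<exists>i<length vs. horizontal_edge vs i \<and> vtx vs k \<in> edge vs i"
    "\<exists>i<length vs. vertical_edge vs i \<and> vtx vs k \<in> edge vs i"
    using idx on by blast+
qed

lemma linear_minimiser_notin_interior:
  fixes f :: "'a::real_normed_vector \<Rightarrow> real"
  assumes lf: "linear f" and fd: "f d < 0" and min: "\<forall>w\<in>S. f z \<le> f w"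
  shows "z \<notin> interior S"
proof
  assume "z \<in> interior S"
  then obtain e where "e > 0" "ball z e \<subseteq> interior S"
    using open_interior open_contains_ball by blast
  then have e: "e > 0" "ball z e \<subseteq> S" using interior_subset by blast+
  have "d \<noteq> 0" using fd lf by (auto simp: linear_0)
  define t where "t = e / (2 * norm d)"
  have "t > 0" "norm (t *\<^sub>R d) < e" using e \<open>d \<noteq> 0\<close> by (simp_all add: t_def)
  then have "z + t *\<^sub>R d \<in> S" using e by (auto simp: dist_norm)
  moreover have "f (z + t *\<^sub>R d) = f z + t * f d" using linear_add[OF lf] linear_scale[OF lf] by simp
  moreover have "t * f d < 0" using \<open>t > 0\<close> fd by (simp add: mult_pos_neg)
  ultimately show False using min by fastforce
qed

lemma minimiser_on_level_edge:
  fixes f :: "pt \<Rightarrow> real"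
  assumes lf: "linear f" and fd: "f d < 0"
    and min: "\<forall>w\<in>region vs. f z \<le> f w" and z: "z \<in> region vs"
    and level: "\<And>k. \<exists>i<length vs. f (vtx vs i) = f (vtx vs (Suc i)) \<and> vtx vs k \<in> edge vs i"
  shows "\<exists>i<length vs. f (vtx vs i) = f (vtx vs (Suc i)) \<and> z \<in> edge vs i"
proof -
  have "z \<notin> inside (poly_boundary vs)"
    using linear_minimiser_notin_interior[OF lf fd min] inside_subset_interior_region by blast
  then obtain i where i: "i < length vs" "z \<in> edge vs i"
    using z by (auto simp: region_def poly_boundary_def)
  show ?thesis
  proof (cases "f (vtx vs i) = f (vtx vs (Suc i))")
    case False
    have ends: "vtx vs i \<in> region vs" "vtx vs (Suc i) \<in> region vs"
      using edge_subset_region[OF i(1)] by (auto simp: edge_def)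
    obtain w where w: "w \<in> closed_segment (vtx vs i) (vtx vs (Suc i))" "f w \<noteq> f z"
      using False by (metis ends_in_segment)
    have "z = vtx vs i \<or> z = vtx vs (Suc i)"
      by (rule segment_extremum_at_end[OF lf i(2)[unfolded edge_def] w]) (use min ends in auto)
    then obtain k where "z = vtx vs k" by blast
    then show ?thesis using level[of k] by simp
  qed (use i in blast)
qed

lemma linear_constant_on_edge:
  fixes f :: "pt \<Rightarrow> real"
  assumes "linear f" "f (vtx vs i) = f (vtx vs (Suc i))" "z \<in> edge vs i" "w \<in> edge vs i"
  shows "f w = f z"
  using linear_constant_on_segment[OF assms(1)] assms(2-4) unfolding edge_def by metis

lemma extreme_edgeI:
  assumes "simple_polygon vs" "i < length vs"
    and "\<forall>w\<in>edge vs i. fst w \<in> {xmin vs, xmax vs} \<or> snd w \<in> {ymin vs, ymax vs}"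
  shows "extreme_edge vs i"
  using assms side_point_frontier_bbox edge_subset_region unfolding extreme_edge_def by blast

lemma side_point_on_level_edge:
  fixes f :: "pt \<Rightarrow> real"
  assumes sp: "simple_polygon vs" and lf: "linear f" and "f d \<noteq> 0"
    and level: "\<And>k. \<exists>i<length vs. f (vtx vs i) = f (vtx vs (Suc i)) \<and> vtx vs k \<in> edge vs i"
    and z: "z \<in> region vs" "f z \<in> {Inf (f ` region vs), Sup (f ` region vs)}"
  obtains i where "i < length vs" "f (vtx vs i) = f (vtx vs (Suc i))" "z \<in> edge vs i"
    "\<forall>w\<in>edge vs i. f w = f z"
proof -
  have range: "f w \<in> {Inf (f ` region vs)..Sup (f ` region vs)}" if "w \<in> region vs" for w
    using projection_region_interval[OF sp lf] that by blast
  define e where "e = (if f d < 0 then d else - d)"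
  have fe: "f e < 0" "- f (- e) < 0"
    using \<open>f d \<noteq> 0\<close> linear_neg[OF lf] by (auto simp: e_def)
  have "\<exists>i<length vs. f (vtx vs i) = f (vtx vs (Suc i)) \<and> z \<in> edge vs i"
  proof (cases "f z = Inf (f ` region vs)")
    case True
    then show ?thesis
      using minimiser_on_level_edge[OF lf fe(1) _ z(1) level] range by auto
  next
    case False
    then have "\<forall>w\<in>region vs. - f z \<le> - f w" using z(2) range by auto
    then show ?thesis
      using minimiser_on_level_edge[OF linear_compose_neg[OF lf] fe(2) _ z(1)] level by auto
  qed
  then obtain i where i: "i < length vs" "f (vtx vs i) = f (vtx vs (Suc i))" "z \<in> edge vs i"
    by blast
  moreover have "\<forall>w\<in>edge vs i. f w = f z"
    using i(2) by (intro ballI linear_constant_on_edge[OF lf _ i(3)])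
  ultimately show thesis using that by blast
qed

lemma horizontal_side_extreme_edge:
  assumes ob: "obstacle vs" and rl: "rectilinear vs" and z: "z \<in> region vs"
    and side: "snd z \<in> {ymin vs, ymax vs}"
  obtains i where "extreme_edge vs i" "horizontal_edge vs i" "z \<in> edge vs i"
    "\<forall>w\<in>edge vs i. snd w = snd z"
proof -
  have sp: "simple_polygon vs" using ob by (simp add: obstacle_def)
  obtain i where i: "i < length vs" "horizontal_edge vs i" "z \<in> edge vs i"
    and const: "\<forall>w\<in>edge vs i. snd w = snd z"
    using side_point_on_level_edge[OF sp linear_snd, of "(0, 1)" z]
      vertex_on_horizontal_and_vertical_edge(1)[OF ob rl] z side
    by (auto simp: horizontal_edge_def ymin_def ymax_def)
  have "extreme_edge vs i" using extreme_edgeI[OF sp i(1)] const side by auto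
  then show thesis using that i(2,3) const by blast
qed

lemma vertical_side_extreme_edge:
  assumes ob: "obstacle vs" and rl: "rectilinear vs" and z: "z \<in> region vs"
    and side: "fst z \<in> {xmin vs, xmax vs}"
  obtains i where "extreme_edge vs i" "vertical_edge vs i" "z \<in> edge vs i"
    "\<forall>w\<in>edge vs i. fst w = fst z"
proof -
  have sp: "simple_polygon vs" using ob by (simp add: obstacle_def)
  obtain i where i: "i < length vs" "vertical_edge vs i" "z \<in> edge vs i"
    and const: "\<forall>w\<in>edge vs i. fst w = fst z"
    using side_point_on_level_edge[OF sp linear_fst, of "(1, 0)" z]
      vertex_on_horizontal_and_vertical_edge(2)[OF ob rl] z side
    by (auto simp: vertical_edge_def xmin_def xmax_def)
  have "extreme_edge vs i" using extreme_edgeI[OF sp i(1)] const side by auto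
  then show thesis using that i(2,3) const by blast
qed

lemma extreme_corner_of_extreme_edges:
  assumes sp: "simple_polygon vs"
    and i: "extreme_edge vs i" "horizontal_edge vs i" and j: "extreme_edge vs j" "vertical_edge vs j"
    and z: "z \<in> edge vs i" "z \<in> edge vs j"
  shows "extreme_corner vs z"
proof -
  let ?n = "length vs"
  have ne: "vs \<noteq> []" using sp by (auto simp: simple_polygon_def)
  have ij: "i < ?n" "j < ?n" using i(1) j(1) by (auto simp: extreme_edge_def)
  have "i \<noteq> j"
  proof
    assume "i = j"
    then have "vtx vs i = vtx vs (Suc i)"
      using i(2) j(2) by (simp add: horizontal_edge_def vertical_edge_def prod_eq_iff)
    then show False using consecutive_vertices_distinct(2)[OF sp] by blast
  qed
  have "z \<in> {vtx vs i, vtx vs (Suc i)} \<and> z \<in> {vtx vs j, vtx vs (Suc j)}"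
    using simple_polygon_edges_meet[OF sp ij \<open>i \<noteq> j\<close> z]
  proof
    assume "j = Suc i mod ?n \<and> z = vtx vs j"
    moreover have "vtx vs (Suc i mod ?n) = vtx vs (Suc i)" by (rule vtx_mod)
    ultimately show ?thesis by simp
  next
    assume "i = Suc j mod ?n \<and> z = vtx vs i"
    moreover have "vtx vs (Suc j mod ?n) = vtx vs (Suc j)" by (rule vtx_mod)
    ultimately show ?thesis by simp
  qed
  moreover have "z \<in> set vs" using calculation vtx_in_set[OF ne] by auto
  ultimately show ?thesis
    unfolding extreme_corner_def using \<open>i \<noteq> j\<close> i(1) j(1) by blast
qed

lemma general_obstacle_box_without_corners:
  assumes "general_obstacle vs"
  shows "box_without_corners (region vs) (xmin vs) (xmax vs) (ymin vs) (ymax vs)"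
proof (rule box_without_corners.intro)
  have ob: "obstacle vs" and rl: "rectilinear vs" and no_corner: "\<nexists>v. extreme_corner vs v"
    using assms by (auto simp: general_obstacle_def rect_convex_def)
  show "region vs \<subseteq> {xmin vs..xmax vs} \<times> {ymin vs..ymax vs}"
    using ob region_subset_bbox by (simp add: obstacle_def)
  fix z assume z: "z \<in> region vs" "fst z \<in> {xmin vs, xmax vs}" "snd z \<in> {ymin vs, ymax vs}"
  obtain i where i: "extreme_edge vs i" "horizontal_edge vs i" "z \<in> edge vs i"
    using horizontal_side_extreme_edge[OF ob rl z(1,3)] .
  obtain j where j: "extreme_edge vs j" "vertical_edge vs j" "z \<in> edge vs j"
    using vertical_side_extreme_edge[OF ob rl z(1,2)] .
  have "simple_polygon vs" using ob by (simp add: obstacle_def)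
  then have "extreme_corner vs z" by (rule extreme_corner_of_extreme_edges[OF _ i(1,2) j(1,2) i(3) j(3)])
  then show False using no_corner by blast
qed

section \<open>Skeletons\<close>

lemma skeleton_meets_aligned_segment:
  assumes sk: "skeleton vs S" and out: "p \<notin> interior (region vs)" "q \<notin> interior (region vs)"
    and aligned: "fst p = fst q \<or> snd p = snd q"
    and crosses: "closed_segment p q \<inter> interior (region vs) \<noteq> {}"
  shows "closed_segment p q \<inter> \<Union>S \<noteq> {}"
proof -
  have "P \<inter> interior (region vs) \<noteq> {}" if P: "P \<in> one_corner_paths p q" for P
  proof -
    obtain ps where "P = path_set ps" "shortest_rect_path ps p q"
      using P unfolding one_corner_paths_def by blast
    then show ?thesis using shortest_rect_path_aligned[OF _ aligned] crosses by blast
  qed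
  then have "\<forall>P\<in>one_corner_paths p q. \<exists>s\<in>S. P \<inter> s \<noteq> {}"
    using sk out unfolding skeleton_def by blast
  then show ?thesis using segment_in_one_corner_paths[OF aligned] by blast
qed

lemma skeleton_meets_axis_lines:
  assumes sp: "simple_polygon vs" and sk: "skeleton vs S" and w: "w \<in> interior (region vs)"
  shows "fst w \<in> fst ` \<Union>S" "snd w \<in> snd ` \<Union>S"
proof -
  have box: "region vs \<subseteq> {xmin vs..xmax vs} \<times> {ymin vs..ymax vs}" by (rule region_subset_bbox[OF sp])
  have "w \<in> region vs" using w interior_subset by blast
  then have w_box: "fst w \<in> {xmin vs..xmax vs}" "snd w \<in> {ymin vs..ymax vs}" using box by auto
  have outside: "z \<notin> interior (region vs)"
    if z: "fst z \<notin> {xmin vs..xmax vs} \<or> snd z \<notin> {ymin vs..ymax vs}" for z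
  proof
    assume "z \<in> interior (region vs)"
    then have "z \<in> {xmin vs..xmax vs} \<times> {ymin vs..ymax vs}" using box interior_subset by blast
    then show False using z by (simp add: mem_Times_iff)
  qed
  let ?p = "(fst w, ymin vs - 1)" and ?q = "(fst w, ymax vs + 1)"
  have "w \<in> closed_segment ?p ?q"
    using w_box by (simp add: closed_segment_same_fst closed_segment_eq_real_ivl)
  then have "closed_segment ?p ?q \<inter> interior (region vs) \<noteq> {}" using w by blast
  moreover have "?p \<notin> interior (region vs)" "?q \<notin> interior (region vs)" by (simp_all add: outside)
  ultimately have "closed_segment ?p ?q \<inter> \<Union>S \<noteq> {}"
    by (intro skeleton_meets_aligned_segment[OF sk]) simp_all
  then obtain z where "z \<in> \<Union>S" "z \<in> closed_segment ?p ?q" by blast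
  moreover from this(2) have "fst z = fst w" by (simp add: closed_segment_same_fst)
  ultimately show "fst w \<in> fst ` \<Union>S" by (intro image_eqI[where x = z]) simp_all
  let ?p = "(xmin vs - 1, snd w)" and ?q = "(xmax vs + 1, snd w)"
  have "w \<in> closed_segment ?p ?q"
    using w_box by (simp add: closed_segment_same_snd closed_segment_eq_real_ivl)
  then have "closed_segment ?p ?q \<inter> interior (region vs) \<noteq> {}" using w by blast
  moreover have "?p \<notin> interior (region vs)" "?q \<notin> interior (region vs)" by (simp_all add: outside)
  ultimately have "closed_segment ?p ?q \<inter> \<Union>S \<noteq> {}"
    by (intro skeleton_meets_aligned_segment[OF sk]) simp_all
  then obtain z where "z \<in> \<Union>S" "z \<in> closed_segment ?p ?q" by blast
  moreover from this(2) have "snd z = snd w" by (simp add: closed_segment_same_snd)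
  ultimately show "snd w \<in> snd ` \<Union>S" by (intro image_eqI[where x = z]) simp_all
qed

text \<open>Interior points suffice: the obstacle is the closure of its interior and the image of
  the compact set [\<Union>S] is closed.\<close>
lemma skeleton_covers_projections:
  assumes sp: "simple_polygon vs" and sk: "skeleton vs S"
  shows "{xmin vs..xmax vs} \<subseteq> fst ` \<Union>S" "{ymin vs..ymax vs} \<subseteq> snd ` \<Union>S"
proof -
  have "compact (\<Union>S)"
    using sk unfolding skeleton_def is_closed_segment_def by (auto intro!: compact_Union)
  then have closed: "closed (fst ` \<Union>S)" "closed (snd ` \<Union>S)"
    by (auto intro!: compact_imp_closed compact_continuous_image continuous_intros)
  have inside: "fst ` inside (poly_boundary vs) \<subseteq> fst ` \<Union>S"
    "snd ` inside (poly_boundary vs) \<subseteq> snd ` \<Union>S"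
    using skeleton_meets_axis_lines[OF sp sk] inside_subset_interior_region by blast+
  have "fst ` region vs \<subseteq> fst ` \<Union>S" "snd ` region vs \<subseteq> snd ` \<Union>S"
    unfolding region_eq_closure_inside[OF sp]
    by (rule image_closure_subset[OF _ closed(1) inside(1)] image_closure_subset[OF _ closed(2) inside(2)],
        intro continuous_intros)+
  then show "{xmin vs..xmax vs} \<subseteq> fst ` \<Union>S" "{ymin vs..ymax vs} \<subseteq> snd ` \<Union>S"
    using fst_region[OF sp] snd_region[OF sp] by simp_all
qed

lemma union_of_at_most_two_segments:
  assumes "finite S" "S \<noteq> {}" "card S \<le> 2" "\<forall>s\<in>S. is_closed_segment s"
  obtains u1 v1 u2 v2 where "\<Union>S = closed_segment u1 v1 \<union> closed_segment u2 v2"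
proof -
  have "card S = 1 \<or> card S = 2" using assms(1-3) card_gt_0_iff[of S] by linarith
  then obtain s1 s2 where "S = {s1, s2}"
  proof
    assume "card S = 1"
    then obtain s where "S = {s}" by (rule card_1_singletonE)
    then show thesis using that[of s s] by simp
  next
    assume "card S = 2"
    then show thesis using that card_2_iff[of S] by blast
  qed
  moreover from this have "is_closed_segment s1" "is_closed_segment s2" using assms(4) by simp_all
  then obtain u1 v1 u2 v2 where "s1 = closed_segment u1 v1" "s2 = closed_segment u2 v2"
    unfolding is_closed_segment_def by blast
  ultimately show thesis using that by simp
qed

lemma has_crossI:
  assumes ob: "obstacle vs" and rl: "rectilinear vs"
    and T: "snd T = ymax vs" and B: "snd B = ymin vs" and TB: "closed_segment T B \<subseteq> region vs"
    and L: "fst L = xmin vs" and R: "fst R = xmax vs" and LR: "closed_segment L R \<subseteq> region vs"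
    and "xmin vs < xmax vs" "ymin vs < ymax vs"
  shows "has_cross vs"
proof -
  have "T \<in> region vs" "B \<in> region vs" "L \<in> region vs" "R \<in> region vs" using TB LR by auto
  obtain i where i: "extreme_edge vs i" "horizontal_edge vs i" "T \<in> edge vs i"
    "\<forall>w\<in>edge vs i. snd w = snd T"
    using horizontal_side_extreme_edge[OF ob rl \<open>T \<in> region vs\<close>] T by auto
  obtain j where j: "extreme_edge vs j" "horizontal_edge vs j" "B \<in> edge vs j"
    using horizontal_side_extreme_edge[OF ob rl \<open>B \<in> region vs\<close>] B by auto
  obtain i' where i': "extreme_edge vs i'" "vertical_edge vs i'" "R \<in> edge vs i'"
    "\<forall>w\<in>edge vs i'. fst w = fst R"
    using vertical_side_extreme_edge[OF ob rl \<open>R \<in> region vs\<close>] R by auto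
  obtain j' where j': "extreme_edge vs j'" "vertical_edge vs j'" "L \<in> edge vs j'"
    using vertical_side_extreme_edge[OF ob rl \<open>L \<in> region vs\<close>] L by auto
  have ij: "i \<noteq> j"
  proof
    assume "i = j"
    then have "snd B = snd T" using i(4) j(3) by simp
    then show False using T B \<open>ymin vs < ymax vs\<close> by simp
  qed
  have ij': "j' \<noteq> i'"
  proof
    assume "j' = i'"
    then have "fst L = fst R" using i'(4) j'(3) by simp
    then show False using L R \<open>xmin vs < xmax vs\<close> by simp
  qed
  have "\<exists>a b i j. closed_segment T B = closed_segment a b \<and> i \<noteq> j \<and>
      extreme_edge vs i \<and> horizontal_edge vs i \<and> extreme_edge vs j \<and> horizontal_edge vs j \<and>
      a \<in> edge vs i \<and> b \<in> edge vs j"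
    by (rule exI[of _ T], rule exI[of _ B], rule exI[of _ i], rule exI[of _ j]) (simp add: ij i j)
  moreover have "\<exists>a b i j. closed_segment L R = closed_segment a b \<and> i \<noteq> j \<and>
      extreme_edge vs i \<and> vertical_edge vs i \<and> extreme_edge vs j \<and> vertical_edge vs j \<and>
      a \<in> edge vs i \<and> b \<in> edge vs j"
    by (rule exI[of _ L], rule exI[of _ R], rule exI[of _ j'], rule exI[of _ i']) (simp add: ij' i' j')
  ultimately have "is_cross vs (closed_segment T B) (closed_segment L R)"
    unfolding is_cross_def using TB LR by blast
  then show ?thesis by (auto simp: has_cross_def)
qed

theorem two_segment_skeleton_has_cross:
  assumes go: "general_obstacle vs" and sk: "skeleton vs S"
    and S: "\<Union>S = closed_segment u1 v1 \<union> closed_segment u2 v2"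
  shows "has_cross vs"
proof -
  have ob: "obstacle vs" and rc: "rect_convex vs" using go by (simp_all add: general_obstacle_def)
  have sp: "simple_polygon vs" and rl: "rectilinear vs"
    using ob rc by (simp_all add: obstacle_def rect_convex_def)
  interpret box_without_corners "region vs" "xmin vs" "xmax vs" "ymin vs" "ymax vs"
    by (rule general_obstacle_box_without_corners[OF go])
  have "closed_segment u1 v1 \<subseteq> region vs" "closed_segment u2 v2 \<subseteq> region vs"
    using sk S by (auto simp: skeleton_def)
  then obtain T B L R where TB: "snd T = ymax vs" "snd B = ymin vs" "closed_segment T B \<subseteq> region vs"
    and LR: "fst L = xmin vs" "fst R = xmax vs" "closed_segment L R \<subseteq> region vs"
    using cross_of_transversals rect_convex_region[OF rc] skeleton_covers_projections[OF sp sk]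
    unfolding S by metis
  have "L \<in> region vs" "B \<in> region vs" using LR(3) TB(3) by auto
  then have "ymin vs < ymax vs" "xmin vs < xmax vs"
    using LR(1) TB(2) in_box no_box_corner by fastforce+
  then show ?thesis using has_crossI[OF ob rl TB LR] by simp
qed

theorem corollary2:
  fixes vs :: "pt list" and S :: "pt set set"
  assumes "general_obstacle vs"
    and "\<not> has_cross vs"
    and "min_skeleton vs S"
  shows "card S \<ge> 3"
proof (rule ccontr)
  assume "\<not> card S \<ge> 3"
  have sk: "skeleton vs S" using assms(3) by (simp add: min_skeleton_def)
  have sp: "simple_polygon vs"
    using assms(1) by (simp add: general_obstacle_def obstacle_def)
  have "{xmin vs..xmax vs} \<noteq> {}" using fst_region[OF sp] region_nonempty[OF sp] by auto
  then have "S \<noteq> {}" using skeleton_covers_projections(1)[OF sp sk] by auto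
  moreover have "finite S" "\<forall>s\<in>S. is_closed_segment s" using sk by (simp_all add: skeleton_def)
  moreover have "card S \<le> 2" using \<open>\<not> card S \<ge> 3\<close> by simp
  ultimately obtain u1 v1 u2 v2 where "\<Union>S = closed_segment u1 v1 \<union> closed_segment u2 v2"
    using union_of_at_most_two_segments by metis
  then have "has_cross vs" by (rule two_segment_skeleton_has_cross[OF assms(1) sk])
  with assms(2) show False ..
qed

end
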